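(* Let $X$ be a smooth manifold and let $a,x_1,x_2,x_3\in H^2(X;\mathbb{R})$ satisfy $a\cup x_i=0$ for $i=1,2,3$. Then the triple Massey products $\langle x_1,a,x_2\rangle$, $\langle x_1,a,x_3\rangle$, $\langle x_2,a,x_3\rangle$ are defined, and for any two elements $b_1,b_2$ of the G-Massey product $\langle a;x_1,x_2,x_3\rangle$ one has $$b_1-b_2\in W:=\langle x_1,a,x_2\rangle\cup H^3(X)+\langle x_1,a,x_3\rangle\cup H^3(X)+\langle x_2,a,x_3\rangle\cup H^3(X)\subset H^8(X).$$
   Context: All cohomology is real de Rham cohomology. For classes $a_i\in H^{p_i}(X)$ with $a_1\cup a_2=0$, $a_2\cup a_3=0$, the triple Massey product is the subset $\langle a_1,a_2,a_3\rangle=\{[\alpha_1\wedge\eta+(-1)^{p_1+1}\xi\wedge\alpha_3] : a_i=[\alpha_i],\ \alpha_1\wedge\alpha_2=d\xi,\ \alpha_2\wedge\alpha_3=d\eta\}\subset H^{p_1+p_2+p_3-1}(X)$. For a subset $S\subset H^k(X)$ and $c\in H^l(X)$ (or a subspace), $S\cup H^3(X)$ denotes the span of products. G-Massey product: for $a,x_1,x_2,x_3\in H^2(X)$ with $a\cup x_i=0$ ($i=1,2,3$), $\langle a;x_1,x_2,x_3\rangle$ is the set of classes $[\xi_1\wedge\xi_2\wedge\beta_3+\xi_2\wedge\xi_3\wedge\beta_1+\xi_3\wedge\xi_1\wedge\beta_2]\in H^8(X)$, over all closed 2-forms $\alpha,\beta_i$ with $a=[\alpha]$, $x_i=[\beta_i]$,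 and all 3-forms $\xi_i$ with $\alpha\wedge\beta_i=d\xi_i$ (these forms are closed). It is called trivial if $0\in\langle a;x_1,x_2,x_3\rangle$. *)

theory Defs
  imports "HOL-Analysis.Analysis"
begin

text \<open>
  Abstract model of the real de Rham algebra of a manifold: a graded-commutative
  differential graded algebra over the reals.  The total space of forms is a
  real vector space of type 'a; hom k is the subspace of homogeneous k-forms,
  mul is the wedge product and d the exterior derivative.
\<close>

definition cdga :: "(nat \<Rightarrow> 'a::real_vector set) \<Rightarrow> ('a \<Rightarrow> 'a \<Rightarrow> 'a) \<Rightarrow> ('a \<Rightarrow> 'a) \<Rightarrow> bool" where
  "cdga hom mul d \<longleftrightarrow>
     (\<forall>k. subspace (hom k)) \<and>
     bilinear mul \<and> linear d \<and>
     (\<forall>x y z. mul (mul x y) z = mul x (mul y z)) \<and>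
     (\<forall>p q x y. x \<in> hom p \<longrightarrow> y \<in> hom q \<longrightarrow> mul x y \<in> hom (p + q)) \<and>
     (\<forall>p q x y. x \<in> hom p \<longrightarrow> y \<in> hom q \<longrightarrow> mul x y = ((-1) ^ (p * q)) *\<^sub>R mul y x) \<and>
     (\<forall>k x. x \<in> hom k \<longrightarrow> d x \<in> hom (Suc k)) \<and>
     (\<forall>x. d (d x) = 0) \<and>
     (\<forall>p x y. x \<in> hom p \<longrightarrow> d (mul x y) = mul (d x) y + ((-1) ^ p) *\<^sub>R mul x (d y))"

definition closed_form :: "(nat \<Rightarrow> 'a::real_vector set) \<Rightarrow> ('a \<Rightarrow> 'a) \<Rightarrow> nat \<Rightarrow> 'a \<Rightarrow> bool" where
  "closed_form hom d k x \<longleftrightarrow> x \<in> hom k \<and> d x = 0"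

definition exact_form :: "(nat \<Rightarrow> 'a::real_vector set) \<Rightarrow> ('a \<Rightarrow> 'a) \<Rightarrow> nat \<Rightarrow> 'a \<Rightarrow> bool" where
  "exact_form hom d k x \<longleftrightarrow> x \<in> hom k \<and> (x = 0 \<or> (0 < k \<and> (\<exists>y \<in> hom (k - 1). x = d y)))"

definition hclass :: "(nat \<Rightarrow> 'a::real_vector set) \<Rightarrow> ('a \<Rightarrow> 'a) \<Rightarrow> nat \<Rightarrow> 'a \<Rightarrow> 'a set" where
  "hclass hom d k x = {y. closed_form hom d k y \<and> exact_form hom d k (x - y)}"

definition hcoh :: "(nat \<Rightarrow> 'a::real_vector set) \<Rightarrow> ('a \<Rightarrow> 'a) \<Rightarrow> nat \<Rightarrow> 'a set set" where
  "hcoh hom d k = hclass hom d k ` {x. closed_form hom d k x}"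

definition hcup :: "(nat \<Rightarrow> 'a::real_vector set) \<Rightarrow> ('a \<Rightarrow> 'a \<Rightarrow> 'a) \<Rightarrow> ('a \<Rightarrow> 'a) \<Rightarrow> nat \<Rightarrow> nat \<Rightarrow> 'a set \<Rightarrow> 'a set \<Rightarrow> 'a set" where
  "hcup hom mul d p q a b = hclass hom d (p + q) (mul (SOME x. x \<in> a) (SOME y. y \<in> b))"

definition hminus :: "'a::real_vector set \<Rightarrow> 'a set \<Rightarrow> 'a set" where
  "hminus a b = {x - y | x y. x \<in> a \<and> y \<in> b}"

definition massey :: "(nat \<Rightarrow> 'a::real_vector set) \<Rightarrow> ('a \<Rightarrow> 'a \<Rightarrow> 'a) \<Rightarrow> ('a \<Rightarrow> 'a) \<Rightarrow>
    nat \<Rightarrow> nat \<Rightarrow> nat \<Rightarrow> 'a set \<Rightarrow> 'a set \<Rightarrow> 'a set \<Rightarrow> 'a set set" where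
  "massey hom mul d p1 p2 p3 a1 a2 a3 =
     {hclass hom d (p1 + p2 + p3 - 1) (mul al1 eta + ((-1) ^ (p1 + 1)) *\<^sub>R mul xi al3) | al1 al2 al3 xi eta.
        al1 \<in> a1 \<and> al2 \<in> a2 \<and> al3 \<in> a3 \<and>
        xi \<in> hom (p1 + p2 - 1) \<and> eta \<in> hom (p2 + p3 - 1) \<and>
        mul al1 al2 = d xi \<and> mul al2 al3 = d eta}"

definition gmassey :: "(nat \<Rightarrow> 'a::real_vector set) \<Rightarrow> ('a \<Rightarrow> 'a \<Rightarrow> 'a) \<Rightarrow> ('a \<Rightarrow> 'a) \<Rightarrow>
    'a set \<Rightarrow> 'a set \<Rightarrow> 'a set \<Rightarrow> 'a set \<Rightarrow> 'a set set" where
  "gmassey hom mul d a x1 x2 x3 =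
     {hclass hom d 8 (mul (mul xi1 xi2) be3 + mul (mul xi2 xi3) be1 + mul (mul xi3 xi1) be2)
        | al be1 be2 be3 xi1 xi2 xi3.
        al \<in> a \<and> be1 \<in> x1 \<and> be2 \<in> x2 \<and> be3 \<in> x3 \<and>
        xi1 \<in> hom 3 \<and> xi2 \<in> hom 3 \<and> xi3 \<in> hom 3 \<and>
        mul al be1 = d xi1 \<and> mul al be2 = d xi2 \<and> mul al be3 = d xi3}"

text \<open>Real scalars are absorbed into the closed l-forms.\<close>
definition cup_span :: "(nat \<Rightarrow> 'a::real_vector set) \<Rightarrow> ('a \<Rightarrow> 'a \<Rightarrow> 'a) \<Rightarrow> ('a \<Rightarrow> 'a) \<Rightarrow>
    nat \<Rightarrow> nat \<Rightarrow> 'a set set \<Rightarrow> 'a set set" where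
  "cup_span hom mul d k l S =
     {hclass hom d (k + l) (\<Sum>j<n. mul (m j) (h j)) | (n::nat) m h.
        \<forall>j<n. (\<exists>s\<in>S. m j \<in> s) \<and> closed_form hom d l (h j)}"

end

theory Submission
  imports Defs
begin

(* Two defining systems (alpha, beta_i, xi_i) of the G-Massey product are connected in three
   moves.  Replacing alpha by alpha + d s and xi_i by xi_i + s beta_i leaves the G-Massey form
   xi_1 xi_2 beta_3 + xi_2 xi_3 beta_1 + xi_3 xi_1 beta_2 unchanged; replacing beta_i by
   beta_i + d t_i and xi_i by xi_i + alpha t_i changes it by an exact form.  What remains is a
   change of each xi_i by a closed 3-form c_i, which changes the form by a sum of products
   (beta_j xi_k - xi_j beta_k) c_i, and each coefficient represents a Massey product
   <x_j, a, x_k>. *)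

locale cdg_algebra =
  fixes hom :: "nat \<Rightarrow> 'a::real_vector set" and mul :: "'a \<Rightarrow> 'a \<Rightarrow> 'a" and d :: "'a \<Rightarrow> 'a"
  assumes cdga: "cdga hom mul d"
begin

lemma subspace_hom: "subspace (hom k)"
  using cdga unfolding cdga_def by blast

lemma bilinear_mul: "bilinear mul"
  using cdga unfolding cdga_def by blast

lemma linear_d: "linear d"
  using cdga unfolding cdga_def by blast

lemma mul_assoc: "mul (mul x y) z = mul x (mul y z)"
  using cdga unfolding cdga_def by blast

lemma mul_hom: "x \<in> hom p \<Longrightarrow> y \<in> hom q \<Longrightarrow> p + q = r \<Longrightarrow> mul x y \<in> hom r"
  using cdga unfolding cdga_def by blast

lemma mul_graded_commute: "x \<in> hom p \<Longrightarrow> y \<in> hom q \<Longrightarrow> mul x y = ((-1) ^ (p * q)) *\<^sub>R mul y x"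
  using cdga unfolding cdga_def by blast

lemma d_hom: "x \<in> hom k \<Longrightarrow> Suc k = r \<Longrightarrow> d x \<in> hom r"
  using cdga unfolding cdga_def by blast

lemma d_d [simp]: "d (d x) = 0"
  using cdga unfolding cdga_def by blast

lemma d_mul: "x \<in> hom p \<Longrightarrow> d (mul x y) = mul (d x) y + ((-1) ^ p) *\<^sub>R mul x (d y)"
  using cdga unfolding cdga_def by blast

lemmas mul_simps = bilinear_ladd[OF bilinear_mul] bilinear_radd[OF bilinear_mul]
  bilinear_lmul[OF bilinear_mul] bilinear_rmul[OF bilinear_mul]
  bilinear_lneg[OF bilinear_mul] bilinear_rneg[OF bilinear_mul]
  bilinear_lzero[OF bilinear_mul] bilinear_rzero[OF bilinear_mul]
  bilinear_lsub[OF bilinear_mul] bilinear_rsub[OF bilinear_mul] mul_assoc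

lemmas d_simps = linear_add[OF linear_d] linear_diff[OF linear_d] linear_0[OF linear_d]
  linear_neg[OF linear_d] linear_scale[OF linear_d]

lemmas hom_closed = subspace_add[OF subspace_hom] subspace_diff[OF subspace_hom]
  subspace_neg[OF subspace_hom] subspace_0[OF subspace_hom]

lemma mul_commute_even: "x \<in> hom p \<Longrightarrow> y \<in> hom q \<Longrightarrow> even (p * q) \<Longrightarrow> mul x y = mul y x"
  using mul_graded_commute[of x p y q] by simp

lemma mul_anticommute_odd: "x \<in> hom p \<Longrightarrow> y \<in> hom q \<Longrightarrow> odd p \<Longrightarrow> odd q \<Longrightarrow> mul x y = - mul y x"
  using mul_graded_commute[of x p y q] by simp

lemma mul_left_commute_even:
  "x \<in> hom p \<Longrightarrow> y \<in> hom q \<Longrightarrow> even (p * q) \<Longrightarrow> mul x (mul y z) = mul y (mul x z)"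
  using mul_assoc[of x y z, symmetric] mul_assoc[of y x z] mul_commute_even[of x p y q] by simp

lemma mul_left_anticommute_odd:
  "x \<in> hom p \<Longrightarrow> y \<in> hom q \<Longrightarrow> odd p \<Longrightarrow> odd q \<Longrightarrow> mul x (mul y z) = - mul y (mul x z)"
  using mul_assoc[of x y z, symmetric] mul_assoc[of y x z] mul_anticommute_odd[of x p y q]
  by (simp add: mul_simps)

lemma mul_self_odd: "x \<in> hom p \<Longrightarrow> odd p \<Longrightarrow> mul x x = 0"
  using mul_anticommute_odd[of x p x p] by (simp add: eq_neg_iff_add_eq_0 flip: scaleR_2)

lemma mul_self_odd_left: "x \<in> hom p \<Longrightarrow> odd p \<Longrightarrow> mul x (mul x z) = 0"
  using mul_assoc[of x x z, symmetric] mul_self_odd[of x p] by (simp add: mul_simps)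

lemma d_mul_closed_left: "x \<in> hom p \<Longrightarrow> d x = 0 \<Longrightarrow> d (mul x y) = ((-1) ^ p) *\<^sub>R mul x (d y)"
  using d_mul[of x p y] by (simp add: mul_simps)

lemma d_mul_closed_right: "x \<in> hom p \<Longrightarrow> d y = 0 \<Longrightarrow> d (mul x y) = mul (d x) y"
  using d_mul[of x p y] by (simp add: mul_simps)

lemma primitive_change_left:
  assumes "s \<in> hom p" "d b = 0" "mul a b = d u"
  shows "mul (a + d s) b = d (u + mul s b)"
  using assms d_mul_closed_right[of s p b] by (simp add: mul_simps d_simps)

lemma primitive_change_right:
  assumes "a \<in> hom p" "d a = 0" "mul a b = d u"
  shows "mul a (b + d t) = d (u + ((-1) ^ p) *\<^sub>R mul a t)"
  using assms d_mul_closed_left[of a p t] by (simp add: mul_simps d_simps)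

lemma exact_form_iff: "0 < k \<Longrightarrow> exact_form hom d k x \<longleftrightarrow> (\<exists>y\<in>hom (k - 1). x = d y)"
  unfolding exact_form_def using d_hom[of _ "k - 1" k] d_simps(3)[symmetric] hom_closed(4) by auto

lemma hclass_eq:
  assumes k: "0 < k" and w: "w \<in> hom (k - 1)" "x - y = d w"
  shows "hclass hom d k x = hclass hom d k y"
proof -
  have "exact_form hom d k (x - z) \<longleftrightarrow> exact_form hom d k (y - z)" for z
  proof -
    have "(\<exists>v\<in>hom (k - 1). x - z = d v) \<longleftrightarrow> (\<exists>v\<in>hom (k - 1). y - z = d v)"
    proof
      assume "\<exists>v\<in>hom (k - 1). x - z = d v"
      then obtain v where "v \<in> hom (k - 1)" "x - z = d v" by blast
      then show "\<exists>v\<in>hom (k - 1). y - z = d v"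
        using w by (intro bexI[of _ "v - w"]) (auto simp: d_simps hom_closed algebra_simps)
    next
      assume "\<exists>v\<in>hom (k - 1). y - z = d v"
      then obtain v where "v \<in> hom (k - 1)" "y - z = d v" by blast
      then show "\<exists>v\<in>hom (k - 1). x - z = d v"
        using w by (intro bexI[of _ "v + w"]) (auto simp: d_simps hom_closed algebra_simps)
    qed
    then show ?thesis using exact_form_iff[OF k] by simp
  qed
  then show ?thesis unfolding hclass_def by simp
qed

lemma closed_form_in_hclass: "closed_form hom d k x \<Longrightarrow> x \<in> hclass hom d k x"
  unfolding hclass_def exact_form_def closed_form_def by (simp add: hom_closed)

lemma hclass_memD:
  "y \<in> hclass hom d k x \<Longrightarrow> 0 < k \<Longrightarrow> closed_form hom d k y \<and> (\<exists>w\<in>hom (k - 1). x - y = d w)"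
  unfolding hclass_def using exact_form_iff by blast

lemma hminus_hclass:
  assumes k: "0 < k" and x: "closed_form hom d k x" and y: "closed_form hom d k y"
  shows "hminus (hclass hom d k x) (hclass hom d k y) = hclass hom d k (x - y)"
proof
  show "hminus (hclass hom d k x) (hclass hom d k y) \<subseteq> hclass hom d k (x - y)"
  proof
    fix z assume "z \<in> hminus (hclass hom d k x) (hclass hom d k y)"
    then obtain x' y' where z: "z = x' - y'" and x': "x' \<in> hclass hom d k x" and y': "y' \<in> hclass hom d k y"
      unfolding hminus_def by blast
    obtain u where u: "u \<in> hom (k - 1)" "x - x' = d u" and cx: "closed_form hom d k x'"
      using hclass_memD[OF x' k] by blast
    obtain v where v: "v \<in> hom (k - 1)" "y - y' = d v" and cy: "closed_form hom d k y'"
      using hclass_memD[OF y' k] by blast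
    have "closed_form hom d k z"
      using cx cy z unfolding closed_form_def by (simp add: hom_closed d_simps)
    moreover have "hclass hom d k (x - y) = hclass hom d k z"
      using u v z by (intro hclass_eq[OF k, of "u - v"]) (auto simp: hom_closed d_simps algebra_simps)
    ultimately show "z \<in> hclass hom d k (x - y)"
      using closed_form_in_hclass by simp
  qed
next
  show "hclass hom d k (x - y) \<subseteq> hminus (hclass hom d k x) (hclass hom d k y)"
  proof
    fix z assume z: "z \<in> hclass hom d k (x - y)"
    obtain u where u: "u \<in> hom (k - 1)" "(x - y) - z = d u" and cz: "closed_form hom d k z"
      using hclass_memD[OF z k] by blast
    have "closed_form hom d k (z + y)"
      using cz y unfolding closed_form_def by (simp add: hom_closed d_simps)
    moreover have "hclass hom d k x = hclass hom d k (z + y)"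
      using u by (intro hclass_eq[OF k, of u]) (auto simp: algebra_simps)
    ultimately have "z + y \<in> hclass hom d k x"
      using closed_form_in_hclass by simp
    moreover have "y \<in> hclass hom d k y"
      using closed_form_in_hclass[OF y] .
    ultimately show "z \<in> hminus (hclass hom d k x) (hclass hom d k y)"
      unfolding hminus_def by force
  qed
qed

lemma hcoh_nonempty: "A \<in> hcoh hom d k \<Longrightarrow> \<exists>x. x \<in> A"
  unfolding hcoh_def using closed_form_in_hclass by blast

lemma hcoh_closed: "A \<in> hcoh hom d k \<Longrightarrow> x \<in> A \<Longrightarrow> closed_form hom d k x"
  unfolding hcoh_def hclass_def by blast

lemma hcoh_cohomologous:
  assumes A: "A \<in> hcoh hom d k" and k: "0 < k" and "x \<in> A" "y \<in> A"
  shows "\<exists>w\<in>hom (k - 1). x = y + d w"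
proof -
  obtain z where A_eq: "A = hclass hom d k z"
    using A unfolding hcoh_def by blast
  obtain u v where "u \<in> hom (k - 1)" "z - x = d u" "v \<in> hom (k - 1)" "z - y = d v"
    using hclass_memD[OF _ k] assms(3,4) unfolding A_eq by meson
  then show ?thesis
    by (intro bexI[of _ "v - u"]) (auto simp: hom_closed d_simps algebra_simps)
qed

lemma hcup_zero_imp_exact:
  assumes A: "A \<in> hcoh hom d p" and B: "B \<in> hcoh hom d q" and pq: "0 < p" "0 < q"
    and cup: "hcup hom mul d p q A B = hclass hom d (p + q) 0"
    and "x \<in> A" "y \<in> B"
  shows "\<exists>u\<in>hom (p + q - 1). mul x y = d u"
proof -
  define x0 where "x0 = (SOME x. x \<in> A)"
  define y0 where "y0 = (SOME y. y \<in> B)"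
  have x0: "x0 \<in> A" and y0: "y0 \<in> B"
    unfolding x0_def y0_def using hcoh_nonempty[OF A] hcoh_nonempty[OF B] by (auto intro: someI_ex)
  have cx0: "x0 \<in> hom p" "d x0 = 0" and cy0: "y0 \<in> hom q" "d y0 = 0"
    using hcoh_closed[OF A x0] hcoh_closed[OF B y0] unfolding closed_form_def by auto
  have "closed_form hom d (p + q) (mul x0 y0)"
    unfolding closed_form_def using mul_hom[OF cx0(1) cy0(1)] d_mul_closed_left[OF cx0] cy0
    by (simp add: mul_simps)
  then have "mul x0 y0 \<in> hclass hom d (p + q) 0"
    using closed_form_in_hclass cup unfolding hcup_def x0_def[symmetric] y0_def[symmetric] by metis
  then obtain w where "w \<in> hom (p + q - 1)" "0 - mul x0 y0 = d w"
    using hclass_memD[of _ "p + q" 0] pq by blast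
  then have w: "w \<in> hom (p + q - 1)" "mul x0 y0 = d (- w)"
    by (simp_all add: d_simps minus_equation_iff)
  obtain s where s: "s \<in> hom (p - 1)" "x = x0 + d s"
    using hcoh_cohomologous[OF A pq(1)] assms(6) x0 by blast
  obtain t where t: "t \<in> hom (q - 1)" "y = y0 + d t"
    using hcoh_cohomologous[OF B pq(2)] assms(7) y0 by blast
  have cy: "y \<in> hom q" "d y = 0"
    using hcoh_closed[OF B assms(7)] unfolding closed_form_def by auto
  have "mul x0 y = d (- w + ((-1) ^ p) *\<^sub>R mul x0 t)"
    unfolding t(2) by (rule primitive_change_right[OF cx0 w(2)])
  then have "mul x y = d (- w + ((-1) ^ p) *\<^sub>R mul x0 t + mul s y)"
    unfolding s(2) by (rule primitive_change_left[OF s(1) cy(2)])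
  moreover have "- w + ((-1) ^ p) *\<^sub>R mul x0 t + mul s y \<in> hom (p + q - 1)"
    using w(1) mul_hom[OF cx0(1) t(1), of "p + q - 1"] mul_hom[OF s(1) cy(1), of "p + q - 1"] pq
    by (intro hom_closed subspace_scale[OF subspace_hom]) simp_all
  ultimately show ?thesis by blast
qed

lemma massey_memI:
  assumes "x1 \<in> A1" "x2 \<in> A2" "x3 \<in> A3"
    and c1: "closed_form hom d p1 x1" and c3: "closed_form hom d p3 x3" and p2: "0 < p2"
    and u: "u \<in> hom (p1 + p2 - 1)" and v: "v \<in> hom (p2 + p3 - 1)"
    and du: "mul x1 x2 = d u" and dv: "mul x2 x3 = d v"
  shows "\<exists>C\<in>massey hom mul d p1 p2 p3 A1 A2 A3. mul x1 v + ((-1) ^ (p1 + 1)) *\<^sub>R mul u x3 \<in> C"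
proof -
  have h1: "x1 \<in> hom p1" "d x1 = 0" and h3: "x3 \<in> hom p3" "d x3 = 0"
    using c1 c3 unfolding closed_form_def by auto
  have "closed_form hom d (p1 + p2 + p3 - 1) (mul x1 v + ((-1) ^ (p1 + 1)) *\<^sub>R mul u x3)"
    unfolding closed_form_def
  proof
    show "mul x1 v + ((-1) ^ (p1 + 1)) *\<^sub>R mul u x3 \<in> hom (p1 + p2 + p3 - 1)"
      using mul_hom[OF h1(1) v, of "p1 + p2 + p3 - 1"] mul_hom[OF u h3(1), of "p1 + p2 + p3 - 1"] p2
      by (intro hom_closed subspace_scale[OF subspace_hom]) simp_all
    show "d (mul x1 v + ((-1) ^ (p1 + 1)) *\<^sub>R mul u x3) = 0"
      using d_mul_closed_left[OF h1, of v] d_mul_closed_right[OF u h3(2)]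
      by (simp add: d_simps mul_simps flip: du dv)
  qed
  then show ?thesis
    using assms(1-3) u v du dv closed_form_in_hclass unfolding massey_def by blast
qed

lemma cup_span_sum3I:
  assumes "\<exists>C\<in>S. m1 \<in> C" "\<exists>C\<in>S. m2 \<in> C" "\<exists>C\<in>S. m3 \<in> C"
    and "closed_form hom d l h1" "closed_form hom d l h2" "closed_form hom d l h3"
  shows "hclass hom d (k + l) (mul m1 h1 + mul m2 h2 + mul m3 h3) \<in> cup_span hom mul d k l S"
proof -
  define m where "m = (!) [m1, m2, m3]"
  define h where "h = (!) [h1, h2, h3]"
  have "\<forall>j<3. (\<exists>C\<in>S. m j \<in> C) \<and> closed_form hom d l (h j)"
    using assms by (auto simp: m_def h_def less_Suc_eq numeral_3_eq_3)
  moreover have "(\<Sum>j<3. mul (m j) (h j)) = mul m1 h1 + mul m2 h2 + mul m3 h3"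
    by (simp add: m_def h_def numeral_3_eq_3 algebra_simps)
  ultimately show ?thesis
    unfolding cup_span_def mem_Collect_eq by (metis (no_types, lifting))
qed

definition gmassey_form :: "'a \<Rightarrow> 'a \<Rightarrow> 'a \<Rightarrow> 'a \<Rightarrow> 'a \<Rightarrow> 'a \<Rightarrow> 'a" where
  "gmassey_form b1 b2 b3 x1 x2 x3 = mul (mul x1 x2) b3 + mul (mul x2 x3) b1 + mul (mul x3 x1) b2"

lemma gmassey_form_rotate: "gmassey_form b1 b2 b3 x1 x2 x3 = gmassey_form b2 b3 b1 x2 x3 x1"
  unfolding gmassey_form_def by (simp add: algebra_simps)

lemma gmassey_form_closed:
  assumes closed: "closed_form hom d 2 a" "closed_form hom d 2 b1" "closed_form hom d 2 b2"
      "closed_form hom d 2 b3"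
    and x1: "x1 \<in> hom 3" and x2: "x2 \<in> hom 3" and x3: "x3 \<in> hom 3"
    and dx1: "mul a b1 = d x1" and dx2: "mul a b2 = d x2" and dx3: "mul a b3 = d x3"
  shows "closed_form hom d 8 (gmassey_form b1 b2 b3 x1 x2 x3)"
proof -
  have a: "a \<in> hom 2" "d a = 0"
    and b: "b1 \<in> hom 2" "b2 \<in> hom 2" "b3 \<in> hom 2" "d b1 = 0" "d b2 = 0" "d b3 = 0"
    using closed unfolding closed_form_def by simp_all
  have h12: "mul x1 x2 \<in> hom 6" and h23: "mul x2 x3 \<in> hom 6" and h31: "mul x3 x1 \<in> hom 6"
    using mul_hom x1 x2 x3 by simp_all
  have "gmassey_form b1 b2 b3 x1 x2 x3 \<in> hom 8"
    unfolding gmassey_form_def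
    using mul_hom[OF h12 b(3)] mul_hom[OF h23 b(1)] mul_hom[OF h31 b(2)] by (simp add: hom_closed)
  moreover have
    "d (mul (mul x1 x2) b3) = mul (mul (mul a b1) x2 - mul x1 (mul a b2)) b3"
    "d (mul (mul x2 x3) b1) = mul (mul (mul a b2) x3 - mul x2 (mul a b3)) b1"
    "d (mul (mul x3 x1) b2) = mul (mul (mul a b3) x1 - mul x3 (mul a b1)) b2"
    using d_mul_closed_right[OF h12 b(6)] d_mul_closed_right[OF h23 b(4)]
      d_mul_closed_right[OF h31 b(5)] d_mul[OF x1, of x2] d_mul[OF x2, of x3] d_mul[OF x3, of x1]
      dx1 dx2 dx3 by simp_all
  moreover note
    mul_left_commute_even[OF b(2) b(1)] mul_left_commute_even[OF b(3) b(1)]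
    mul_left_commute_even[OF b(3) b(2)] mul_commute_even[OF b(2) b(1)]
    mul_commute_even[OF b(3) b(1)] mul_commute_even[OF b(3) b(2)]
    mul_left_commute_even[OF x1 a(1)] mul_left_commute_even[OF x2 a(1)] mul_left_commute_even[OF x3 a(1)]
    mul_left_commute_even[OF b(1) a(1)] mul_left_commute_even[OF b(2) a(1)]
    mul_left_commute_even[OF b(3) a(1)] mul_commute_even[OF b(1) a(1)]
    mul_commute_even[OF b(2) a(1)] mul_commute_even[OF b(3) a(1)]
    mul_left_commute_even[OF x1 b(1)] mul_left_commute_even[OF x1 b(2)] mul_left_commute_even[OF x1 b(3)]
    mul_left_commute_even[OF x2 b(1)] mul_left_commute_even[OF x2 b(2)] mul_left_commute_even[OF x2 b(3)]
    mul_left_commute_even[OF x3 b(1)] mul_left_commute_even[OF x3 b(2)] mul_left_commute_even[OF x3 b(3)]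
    mul_commute_even[OF x1 b(1)] mul_commute_even[OF x1 b(2)] mul_commute_even[OF x1 b(3)]
    mul_commute_even[OF x2 b(1)] mul_commute_even[OF x2 b(2)] mul_commute_even[OF x2 b(3)]
    mul_commute_even[OF x3 b(1)] mul_commute_even[OF x3 b(2)] mul_commute_even[OF x3 b(3)]
  ultimately show ?thesis
    unfolding closed_form_def gmassey_form_def d_simps by (simp only: mul_simps) simp
qed

lemma gmassey_form_change_alpha:
  assumes s: "s \<in> hom 1" and b1: "b1 \<in> hom 2" and b2: "b2 \<in> hom 2" and b3: "b3 \<in> hom 2"
    and x1: "x1 \<in> hom 3" and x2: "x2 \<in> hom 3" and x3: "x3 \<in> hom 3"
  shows "gmassey_form b1 b2 b3 (x1 + mul s b1) (x2 + mul s b2) (x3 + mul s b3) =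
    gmassey_form b1 b2 b3 x1 x2 x3"
proof -
  note
    mul_left_commute_even[OF b1 x1] mul_left_commute_even[OF b1 x2] mul_left_commute_even[OF b1 x3]
    mul_left_commute_even[OF b2 x1] mul_left_commute_even[OF b2 x2] mul_left_commute_even[OF b2 x3]
    mul_left_commute_even[OF b3 x1] mul_left_commute_even[OF b3 x2] mul_left_commute_even[OF b3 x3]
    mul_left_commute_even[OF b1 s] mul_left_commute_even[OF b2 s] mul_left_commute_even[OF b3 s]
    mul_left_anticommute_odd[OF x1 s] mul_left_anticommute_odd[OF x2 s] mul_left_anticommute_odd[OF x3 s]
    mul_self_odd_left[OF s] mul_commute_even[OF b2 b1] mul_commute_even[OF b3 b1] mul_commute_even[OF b3 b2]
  then show ?thesis
    unfolding gmassey_form_def by (simp only: mul_simps) simp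
qed

lemma gmassey_form_change_beta:
  assumes a: "a \<in> hom 2" and b2: "b2 \<in> hom 2" and b3: "b3 \<in> hom 2"
    and x2: "x2 \<in> hom 3" and x3: "x3 \<in> hom 3" and t: "t \<in> hom 1"
    and dx2: "mul a b2 = d x2" and dx3: "mul a b3 = d x3"
  shows "gmassey_form (b1 + d t) b2 b3 (x1 + mul a t) x2 x3 - gmassey_form b1 b2 b3 x1 x2 x3 =
    d (mul (mul x2 x3) t)"
proof -
  have "d (mul (mul x2 x3) t) =
      mul (mul (mul a b2) x3) t - mul (mul x2 (mul a b3)) t + mul (mul x2 x3) (d t)"
    using d_mul[of "mul x2 x3" 6 t] d_mul[OF x2, of x3] mul_hom[OF x2 x3] dx2 dx3
    by (simp add: mul_simps)
  moreover have "mul a (mul t (mul x2 b3)) = - mul x2 (mul a (mul b3 t))"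
    using mul_commute_even[OF x2 b3] mul_left_commute_even[OF t b3] mul_left_commute_even[OF x2 a]
      mul_left_commute_even[OF x2 b3] mul_anticommute_odd[OF x2 t] by (simp add: mul_simps)
  moreover have "mul x3 (mul a (mul t b2)) = mul a (mul b2 (mul x3 t))"
    using mul_left_commute_even[OF x3 a] mul_commute_even[OF t b2] mul_left_commute_even[OF x3 b2]
    by simp
  ultimately show ?thesis
    unfolding gmassey_form_def by (simp only: mul_simps) simp
qed

lemma gmassey_form_change_xi:
  assumes c: "c \<in> hom 3" and x2: "x2 \<in> hom 3" and x3: "x3 \<in> hom 3"
    and b2: "b2 \<in> hom 2" and b3: "b3 \<in> hom 2"
  shows "gmassey_form b1 b2 b3 (x1 + c) x2 x3 - gmassey_form b1 b2 b3 x1 x2 x3 =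
    mul (mul b2 x3 - mul x2 b3) c"
proof -
  have "mul c (mul x2 b3) = - mul x2 (mul b3 c)"
    using mul_left_anticommute_odd[OF c x2, of b3] mul_commute_even[OF c b3] by (simp add: mul_simps)
  moreover have "mul x3 (mul c b2) = mul b2 (mul x3 c)"
    using mul_left_commute_even[OF x3 b2, of c] mul_commute_even[OF c b2] by simp
  ultimately show ?thesis
    unfolding gmassey_form_def by (simp add: mul_simps algebra_simps)
qed

lemma gmassey_form_change_betas:
  assumes a: "a \<in> hom 2" "d a = 0"
    and t: "t1 \<in> hom 1" "t2 \<in> hom 1" "t3 \<in> hom 1"
    and x: "x1 \<in> hom 3" "x2 \<in> hom 3" "x3 \<in> hom 3"
    and dx: "mul a b1 = d x1" "mul a b2 = d x2" "mul a b3 = d x3"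
    and b: "b1 \<in> hom 2" "b2 \<in> hom 2" "b3 \<in> hom 2"
  shows "\<exists>w\<in>hom 7. gmassey_form (b1 + d t1) (b2 + d t2) (b3 + d t3)
      (x1 + mul a t1) (x2 + mul a t2) (x3 + mul a t3) - gmassey_form b1 b2 b3 x1 x2 x3 = d w"
proof -
  define y1 where "y1 = x1 + mul a t1"
  define y2 where "y2 = x2 + mul a t2"
  have y: "y1 \<in> hom 3" "y2 \<in> hom 3"
    unfolding y1_def y2_def using x mul_hom[OF a(1) t(1)] mul_hom[OF a(1) t(2)] by (simp_all add: hom_closed)
  have dy: "mul a (b1 + d t1) = d y1" "mul a (b2 + d t2) = d y2"
    unfolding y1_def y2_def using primitive_change_right[OF a] dx by simp_all
  define w where "w = mul (mul x2 x3) t1 + mul (mul x3 y1) t2 + mul (mul y1 y2) t3"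
  have "gmassey_form (b1 + d t1) b2 b3 y1 x2 x3 - gmassey_form b1 b2 b3 x1 x2 x3 = d (mul (mul x2 x3) t1)"
    unfolding y1_def by (rule gmassey_form_change_beta[OF a(1) b(2,3) x(2,3) t(1) dx(2,3)])
  moreover have "gmassey_form (b1 + d t1) (b2 + d t2) b3 y1 y2 x3 - gmassey_form (b1 + d t1) b2 b3 y1 x2 x3
      = d (mul (mul x3 y1) t2)"
    using gmassey_form_change_beta[OF a(1) b(3) _ x(3) y(1) t(2) dx(3) dy(1)] b(1) t(1)
    unfolding y2_def gmassey_form_rotate[of "b1 + d t1"] by (simp add: hom_closed d_hom)
  moreover have "gmassey_form (b1 + d t1) (b2 + d t2) (b3 + d t3) y1 y2 (x3 + mul a t3)
      - gmassey_form (b1 + d t1) (b2 + d t2) b3 y1 y2 x3 = d (mul (mul y1 y2) t3)"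
    using gmassey_form_change_beta[OF a(1) _ _ y t(3) dy] b(1,2) t(1,2)
    unfolding gmassey_form_rotate[of b3 "b1 + d t1" "b2 + d t2" _ y1 y2, symmetric]
      gmassey_form_rotate[of "b3 + d t3" "b1 + d t1" "b2 + d t2" _ y1 y2, symmetric]
    by (simp add: hom_closed d_hom)
  ultimately have "gmassey_form (b1 + d t1) (b2 + d t2) (b3 + d t3) y1 y2 (x3 + mul a t3)
      - gmassey_form b1 b2 b3 x1 x2 x3 = d w"
    unfolding w_def d_simps by (simp add: algebra_simps)
  moreover have "mul x2 x3 \<in> hom 6" "mul x3 y1 \<in> hom 6" "mul y1 y2 \<in> hom 6"
    using x y by (simp_all add: mul_hom)
  with t have "w \<in> hom 7"
    unfolding w_def by (simp add: mul_hom hom_closed)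
  ultimately show ?thesis
    unfolding y1_def y2_def by blast
qed

lemma gmassey_form_change_representatives:
  assumes a: "a \<in> hom 2" "d a = 0" and s: "s \<in> hom 1" "a' = a + d s"
    and b: "b1 \<in> hom 2" "b2 \<in> hom 2" "b3 \<in> hom 2" "d b1 = 0" "d b2 = 0" "d b3 = 0"
    and t: "t1 \<in> hom 1" "t2 \<in> hom 1" "t3 \<in> hom 1"
    and e: "e1 = b1 + d t1" "e2 = b2 + d t2" "e3 = b3 + d t3"
    and u: "u1 \<in> hom 3" "u2 \<in> hom 3" "u3 \<in> hom 3"
    and du: "mul a b1 = d u1" "mul a b2 = d u2" "mul a b3 = d u3"
  obtains z1 z2 z3 where "z1 \<in> hom 3" "z2 \<in> hom 3" "z3 \<in> hom 3"
    and "mul a' e1 = d z1" "mul a' e2 = d z2" "mul a' e3 = d z3"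
    and "\<exists>w\<in>hom 7. gmassey_form e1 e2 e3 z1 z2 z3 - gmassey_form b1 b2 b3 u1 u2 u3 = d w"
proof -
  have a': "a' \<in> hom 2" "d a' = 0"
    using a s by (simp_all add: hom_closed d_hom d_simps)
  define y1 where "y1 = u1 + mul s b1"
  define y2 where "y2 = u2 + mul s b2"
  define y3 where "y3 = u3 + mul s b3"
  have y: "y1 \<in> hom 3" "y2 \<in> hom 3" "y3 \<in> hom 3"
    unfolding y1_def y2_def y3_def using u s(1) b by (simp_all add: mul_hom hom_closed)
  have dy: "mul a' b1 = d y1" "mul a' b2 = d y2" "mul a' b3 = d y3"
    unfolding y1_def y2_def y3_def s(2) using primitive_change_left[OF s(1)] b du by simp_all
  have "gmassey_form b1 b2 b3 y1 y2 y3 = gmassey_form b1 b2 b3 u1 u2 u3"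
    unfolding y1_def y2_def y3_def by (rule gmassey_form_change_alpha[OF s(1) b(1-3) u])
  then have "\<exists>w\<in>hom 7. gmassey_form e1 e2 e3 (y1 + mul a' t1) (y2 + mul a' t2) (y3 + mul a' t3)
      - gmassey_form b1 b2 b3 u1 u2 u3 = d w"
    using gmassey_form_change_betas[OF a' t y dy b(1-3)] unfolding e by simp
  moreover have "y1 + mul a' t1 \<in> hom 3" "y2 + mul a' t2 \<in> hom 3" "y3 + mul a' t3 \<in> hom 3"
    using y a' t by (simp_all add: mul_hom hom_closed)
  moreover have "mul a' e1 = d (y1 + mul a' t1)" "mul a' e2 = d (y2 + mul a' t2)"
    "mul a' e3 = d (y3 + mul a' t3)"
    unfolding e using primitive_change_right[OF a'] dy by simp_all
  ultimately show thesis using that by blast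
qed

lemma gmassey_form_change_primitives:
  assumes b: "b1 \<in> hom 2" "b2 \<in> hom 2" "b3 \<in> hom 2"
    and x: "x1 \<in> hom 3" "x2 \<in> hom 3" "x3 \<in> hom 3" and y: "y1 \<in> hom 3" "y2 \<in> hom 3" "y3 \<in> hom 3"
  shows "gmassey_form b1 b2 b3 y1 y2 y3 - gmassey_form b1 b2 b3 x1 x2 x3 =
    mul (mul b2 x3 - mul x2 b3) (y1 - x1) + mul (mul b1 x3 - mul y1 b3) (x2 - y2) +
    mul (mul b1 y2 - mul y1 b2) (y3 - x3)"
proof -
  \<comment> \<open>The primitives are exchanged one at a time, so the coefficients mix old and new ones.\<close>
  have "gmassey_form b1 b2 b3 y1 x2 x3 - gmassey_form b1 b2 b3 x1 x2 x3 = mul (mul b2 x3 - mul x2 b3) (y1 - x1)"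
    using gmassey_form_change_xi[of "y1 - x1" x2 x3 b2 b3 b1 x1] x y b by (simp add: hom_closed)
  moreover have "gmassey_form b1 b2 b3 y1 y2 x3 - gmassey_form b1 b2 b3 y1 x2 x3 =
      mul (mul b1 x3 - mul y1 b3) (x2 - y2)"
  proof -
    have "mul (mul b3 y1 - mul x3 b1) (y2 - x2) = mul (mul b1 x3 - mul y1 b3) (x2 - y2)"
      using mul_commute_even[of b3 2 y1 3] mul_commute_even[of x3 3 b1 2] b x y by (simp add: mul_simps)
    then show ?thesis
      using gmassey_form_change_xi[of "y2 - x2" x3 y1 b3 b1 b2 x2] x y b
      unfolding gmassey_form_rotate[of b1 b2 b3] by (simp add: hom_closed)
  qed
  moreover have "gmassey_form b1 b2 b3 y1 y2 y3 - gmassey_form b1 b2 b3 y1 y2 x3 =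
      mul (mul b1 y2 - mul y1 b2) (y3 - x3)"
    using gmassey_form_change_xi[of "y3 - x3" y1 y2 b1 b2 b3 x3] x y b
    unfolding gmassey_form_rotate[of b3 b1 b2 _ y1 y2, symmetric] by (simp add: hom_closed)
  ultimately show ?thesis
    by (simp add: algebra_simps)
qed

lemma gmassey_form_diff_decompose:
  assumes closed: "closed_form hom d 2 a" "closed_form hom d 2 b1" "closed_form hom d 2 b2"
      "closed_form hom d 2 b3"
    and s: "s \<in> hom 1" "a' = a + d s"
    and t: "t1 \<in> hom 1" "t2 \<in> hom 1" "t3 \<in> hom 1"
    and e: "e1 = b1 + d t1" "e2 = b2 + d t2" "e3 = b3 + d t3"
    and u: "u1 \<in> hom 3" "u2 \<in> hom 3" "u3 \<in> hom 3"
    and du: "mul a b1 = d u1" "mul a b2 = d u2" "mul a b3 = d u3"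
    and v: "v1 \<in> hom 3" "v2 \<in> hom 3" "v3 \<in> hom 3"
  obtains z1 z2 z3 w where "z1 \<in> hom 3" "z2 \<in> hom 3" "z3 \<in> hom 3"
    and "mul a' e1 = d z1" "mul a' e2 = d z2" "mul a' e3 = d z3" and "w \<in> hom 7"
    and "gmassey_form e1 e2 e3 v1 v2 v3 - gmassey_form b1 b2 b3 u1 u2 u3 =
      mul (mul e2 z3 - mul z2 e3) (v1 - z1) + mul (mul e1 z3 - mul v1 e3) (z2 - v2) +
      mul (mul e1 v2 - mul v1 e2) (v3 - z3) + d w"
proof -
  have a: "a \<in> hom 2" "d a = 0"
    and b: "b1 \<in> hom 2" "b2 \<in> hom 2" "b3 \<in> hom 2" "d b1 = 0" "d b2 = 0" "d b3 = 0"
    using closed unfolding closed_form_def by simp_all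
  obtain z1 z2 z3 where z: "z1 \<in> hom 3" "z2 \<in> hom 3" "z3 \<in> hom 3"
    and dz: "mul a' e1 = d z1" "mul a' e2 = d z2" "mul a' e3 = d z3"
    and "\<exists>w\<in>hom 7. gmassey_form e1 e2 e3 z1 z2 z3 - gmassey_form b1 b2 b3 u1 u2 u3 = d w"
    by (rule gmassey_form_change_representatives[OF a s b t e u du])
  then obtain w where w: "w \<in> hom 7"
    "gmassey_form e1 e2 e3 z1 z2 z3 - gmassey_form b1 b2 b3 u1 u2 u3 = d w"
    by blast
  have "e1 \<in> hom 2" "e2 \<in> hom 2" "e3 \<in> hom 2"
    unfolding e using b t by (simp_all add: hom_closed d_hom)
  from gmassey_form_change_primitives[OF this z v] w(2)
  show thesis
    by (intro that[OF z dz w(1)]) (simp add: algebra_simps)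
qed

lemma gmassey_memE:
  assumes "B \<in> gmassey hom mul d A X1 X2 X3"
    and "A \<in> hcoh hom d 2" "X1 \<in> hcoh hom d 2" "X2 \<in> hcoh hom d 2" "X3 \<in> hcoh hom d 2"
  obtains a b1 b2 b3 x1 x2 x3 where "B = hclass hom d 8 (gmassey_form b1 b2 b3 x1 x2 x3)"
    and "a \<in> A" "b1 \<in> X1" "b2 \<in> X2" "b3 \<in> X3"
    and "closed_form hom d 2 a" "closed_form hom d 2 b1" "closed_form hom d 2 b2" "closed_form hom d 2 b3"
    and "x1 \<in> hom 3" "x2 \<in> hom 3" "x3 \<in> hom 3"
    and "mul a b1 = d x1" "mul a b2 = d x2" "mul a b3 = d x3"
  using assms hcoh_closed unfolding gmassey_def gmassey_form_def by blast

lemma massey_2_2_2_memI: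
  assumes "x \<in> X" "a \<in> A" "y \<in> Y"
    and cx: "closed_form hom d 2 x" and ca: "closed_form hom d 2 a" and cy: "closed_form hom d 2 y"
    and u: "u \<in> hom 3" "mul a x = d u" and v: "v \<in> hom 3" "mul a y = d v"
  shows "\<exists>C\<in>massey hom mul d 2 2 2 X A Y. mul x v - mul u y \<in> C"
proof -
  have xa: "mul x a = d u"
    using mul_commute_even[of x 2 a 2] cx ca u(2) unfolding closed_form_def by simp
  show ?thesis
    using massey_memI[OF assms(1-3) cx cy _ _ _ xa v(2), of 2] u(1) v(1) by simp
qed

lemma massey_nonempty:
  assumes A: "A \<in> hcoh hom d 2" and X: "X \<in> hcoh hom d 2" and Y: "Y \<in> hcoh hom d 2"
    and AX: "hcup hom mul d 2 2 A X = hclass hom d 4 0"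
    and AY: "hcup hom mul d 2 2 A Y = hclass hom d 4 0"
  shows "massey hom mul d 2 2 2 X A Y \<noteq> {}"
proof -
  obtain a x y where axy: "a \<in> A" "x \<in> X" "y \<in> Y"
    using hcoh_nonempty A X Y by meson
  have "\<exists>u\<in>hom 3. mul a x = d u" "\<exists>v\<in>hom 3. mul a y = d v"
    using hcup_zero_imp_exact[of A 2 X 2] hcup_zero_imp_exact[of A 2 Y 2] A X Y AX AY axy by simp_all
  then obtain u v where "u \<in> hom 3" "mul a x = d u" "v \<in> hom 3" "mul a y = d v"
    by blast
  then have "\<exists>C\<in>massey hom mul d 2 2 2 X A Y. mul x v - mul u y \<in> C"
    using massey_2_2_2_memI[OF axy(2,1,3)] hcoh_closed[OF X axy(2)] hcoh_closed[OF A axy(1)]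
      hcoh_closed[OF Y axy(3)] by blast
  then show ?thesis
    by blast
qed

lemma gmassey_primitive_change_in_cup_span:
  assumes reps: "a \<in> A" "b1 \<in> X1" "b2 \<in> X2" "b3 \<in> X3"
    and closed: "closed_form hom d 2 a" "closed_form hom d 2 b1" "closed_form hom d 2 b2"
      "closed_form hom d 2 b3"
    and x: "x1 \<in> hom 3" "x2 \<in> hom 3" "x3 \<in> hom 3"
    and dx: "mul a b1 = d x1" "mul a b2 = d x2" "mul a b3 = d x3"
    and y: "y1 \<in> hom 3" "y2 \<in> hom 3" "y3 \<in> hom 3"
    and dy: "mul a b1 = d y1" "mul a b2 = d y2" "mul a b3 = d y3"
  shows "hclass hom d (5 + 3)
      (mul (mul b2 y3 - mul y2 b3) (x1 - y1) + mul (mul b1 y3 - mul x1 b3) (y2 - x2) +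
       mul (mul b1 x2 - mul x1 b2) (x3 - y3))
    \<in> cup_span hom mul d 5 3
      (massey hom mul d 2 2 2 X1 A X2 \<union> massey hom mul d 2 2 2 X1 A X3 \<union> massey hom mul d 2 2 2 X2 A X3)"
proof -
  have "closed_form hom d 3 (x1 - y1)" "closed_form hom d 3 (y2 - x2)" "closed_form hom d 3 (x3 - y3)"
    unfolding closed_form_def using x y by (simp_all add: hom_closed d_simps flip: dx dy)
  moreover have "\<exists>C\<in>massey hom mul d 2 2 2 X2 A X3. mul b2 y3 - mul y2 b3 \<in> C"
    by (rule massey_2_2_2_memI[OF reps(3,1,4) closed(3,1,4) y(2) dy(2) y(3) dy(3)])
  moreover have "\<exists>C\<in>massey hom mul d 2 2 2 X1 A X3. mul b1 y3 - mul x1 b3 \<in> C"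
    by (rule massey_2_2_2_memI[OF reps(2,1,4) closed(2,1,4) x(1) dx(1) y(3) dy(3)])
  moreover have "\<exists>C\<in>massey hom mul d 2 2 2 X1 A X2. mul b1 x2 - mul x1 b2 \<in> C"
    by (rule massey_2_2_2_memI[OF reps(2,1,3) closed(2,1,3) x(1) dx(1) x(2) dx(2)])
  ultimately show ?thesis
    by (intro cup_span_sum3I) blast+
qed

lemma hminus_gmassey_in_cup_span:
  assumes A: "A \<in> hcoh hom d 2"
    and X: "X1 \<in> hcoh hom d 2" "X2 \<in> hcoh hom d 2" "X3 \<in> hcoh hom d 2"
    and "B \<in> gmassey hom mul d A X1 X2 X3" "B' \<in> gmassey hom mul d A X1 X2 X3"
  shows "hminus B B' \<in> cup_span hom mul d 5 3
    (massey hom mul d 2 2 2 X1 A X2 \<union> massey hom mul d 2 2 2 X1 A X3 \<union> massey hom mul d 2 2 2 X2 A X3)"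
proof -
  obtain a' e1 e2 e3 v1 v2 v3 where B: "B = hclass hom d 8 (gmassey_form e1 e2 e3 v1 v2 v3)"
    and reps': "a' \<in> A" "e1 \<in> X1" "e2 \<in> X2" "e3 \<in> X3"
    and closed': "closed_form hom d 2 a'" "closed_form hom d 2 e1" "closed_form hom d 2 e2"
      "closed_form hom d 2 e3"
    and v: "v1 \<in> hom 3" "v2 \<in> hom 3" "v3 \<in> hom 3"
    and dv: "mul a' e1 = d v1" "mul a' e2 = d v2" "mul a' e3 = d v3"
    using gmassey_memE[OF assms(5) A X] .
  obtain a b1 b2 b3 u1 u2 u3 where B': "B' = hclass hom d 8 (gmassey_form b1 b2 b3 u1 u2 u3)"
    and reps: "a \<in> A" "b1 \<in> X1" "b2 \<in> X2" "b3 \<in> X3"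
    and closed: "closed_form hom d 2 a" "closed_form hom d 2 b1" "closed_form hom d 2 b2"
      "closed_form hom d 2 b3"
    and u: "u1 \<in> hom 3" "u2 \<in> hom 3" "u3 \<in> hom 3"
    and du: "mul a b1 = d u1" "mul a b2 = d u2" "mul a b3 = d u3"
    using gmassey_memE[OF assms(6) A X] .
  have cohomologous: "\<exists>t\<in>hom 1. x = y + d t" if "Z \<in> hcoh hom d 2" "x \<in> Z" "y \<in> Z" for Z x y
    using hcoh_cohomologous[OF that(1) _ that(2,3)] by simp
  obtain s t1 t2 t3 where st: "s \<in> hom 1" "a' = a + d s" "t1 \<in> hom 1" "t2 \<in> hom 1" "t3 \<in> hom 1"
    "e1 = b1 + d t1" "e2 = b2 + d t2" "e3 = b3 + d t3"
    using cohomologous[OF A reps'(1) reps(1)] cohomologous[OF X(1) reps'(2) reps(2)]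
      cohomologous[OF X(2) reps'(3) reps(3)] cohomologous[OF X(3) reps'(4) reps(4)] by blast
  obtain z1 z2 z3 w where z: "z1 \<in> hom 3" "z2 \<in> hom 3" "z3 \<in> hom 3"
    and dz: "mul a' e1 = d z1" "mul a' e2 = d z2" "mul a' e3 = d z3" and w: "w \<in> hom 7"
    and diff: "gmassey_form e1 e2 e3 v1 v2 v3 - gmassey_form b1 b2 b3 u1 u2 u3 =
      mul (mul e2 z3 - mul z2 e3) (v1 - z1) + mul (mul e1 z3 - mul v1 e3) (z2 - v2) +
      mul (mul e1 v2 - mul v1 e2) (v3 - z3) + d w"
    by (rule gmassey_form_diff_decompose[OF closed st u du v])
  have "closed_form hom d 8 (gmassey_form e1 e2 e3 v1 v2 v3)"
    by (rule gmassey_form_closed[OF closed' v dv])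
  moreover have "closed_form hom d 8 (gmassey_form b1 b2 b3 u1 u2 u3)"
    by (rule gmassey_form_closed[OF closed u du])
  ultimately have "hminus B B' = hclass hom d (5 + 3)
      (mul (mul e2 z3 - mul z2 e3) (v1 - z1) + mul (mul e1 z3 - mul v1 e3) (z2 - v2) +
       mul (mul e1 v2 - mul v1 e2) (v3 - z3))"
    using diff w unfolding B B' by (simp add: hminus_hclass hclass_eq[of 8 w])
  also have "\<dots> \<in> cup_span hom mul d 5 3
      (massey hom mul d 2 2 2 X1 A X2 \<union> massey hom mul d 2 2 2 X1 A X3 \<union> massey hom mul d 2 2 2 X2 A X3)"
    by (rule gmassey_primitive_change_in_cup_span[OF reps' closed' v dv z dz])
  finally show ?thesis .
qed

end

theorem lemma2p3:
  fixes hom :: "nat \<Rightarrow> 'a::real_vector set"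
    and mul :: "'a \<Rightarrow> 'a \<Rightarrow> 'a"
    and d :: "'a \<Rightarrow> 'a"
    and a x1 x2 x3 :: "'a set"
  assumes alg: "cdga hom mul d"
    and a: "a \<in> hcoh hom d 2"
    and x1: "x1 \<in> hcoh hom d 2" and x2: "x2 \<in> hcoh hom d 2" and x3: "x3 \<in> hcoh hom d 2"
    and ax1: "hcup hom mul d 2 2 a x1 = hclass hom d 4 0"
    and ax2: "hcup hom mul d 2 2 a x2 = hclass hom d 4 0"
    and ax3: "hcup hom mul d 2 2 a x3 = hclass hom d 4 0"
  shows "massey hom mul d 2 2 2 x1 a x2 \<noteq> {} \<and>
         massey hom mul d 2 2 2 x1 a x3 \<noteq> {} \<and>
         massey hom mul d 2 2 2 x2 a x3 \<noteq> {} \<and>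
         (\<forall>b1 \<in> gmassey hom mul d a x1 x2 x3. \<forall>b2 \<in> gmassey hom mul d a x1 x2 x3.
            hminus b1 b2 \<in> cup_span hom mul d 5 3
              (massey hom mul d 2 2 2 x1 a x2 \<union> massey hom mul d 2 2 2 x1 a x3 \<union>
               massey hom mul d 2 2 2 x2 a x3))"
proof -
  interpret cdg_algebra hom mul d
    by (rule cdg_algebra.intro[OF alg])
  show ?thesis
    using massey_nonempty[OF a x1 x2 ax1 ax2] massey_nonempty[OF a x1 x3 ax1 ax3]
      massey_nonempty[OF a x2 x3 ax2 ax3] hminus_gmassey_in_cup_span[OF a x1 x2 x3]
    by blast
qed

end
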